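(* Let $\Omega$ be the closure of a bounded domain in $\mathbb{R}^d$ and let $X$ be a Banach space of functions on $\Omega$ with $C(\Omega)\subset X$ and $\|g\|_X\le C_X\|g\|_{C(\Omega)}$ for $g\in C(\Omega)$. Let $Y$ be a linear subspace of $C(\Omega)$ with norm $\|\cdot\|_Y$ such that $K:=U(Y)=\{g\in Y:\|g\|_Y\le1\}$ is a compact subset of $C(\Omega)$, and let $C_Y$ be such that $\|g\|_{C(\Omega)}\le C_Y$ for all $g\in K$. Let ${\bf x}=(x_1,\dots,x_m)\in\Omega^m$, $f\in K$, $w:=\lambda_{\bf x}(f)$, and assume $R(K_w)_X\neq0$. For $\mu>0$ define on $C(\Omega)$ $$\mathcal{L}_\mu(g):=\|\lambda_{\bf x}(g)-w\|+\mu\|g\|_Y .$$ Let $C>2$, and let $\mu>0$, $\delta>0$ satisfy $\delta\le\mu^2$ and $$C_X\varepsilon+2R(K(w,2\varepsilon))_X\le C\,R(K_w)_X,\qquad\varepsilon:=\mu\max(\mu+1,C_Y)$$ (this holds for all sufficiently small $\mu$). Let $\Sigma\subset C(\Omega)$ satisfy $\operatorname{dist}(K,\Sigma\cap K)_{C(\Omega)}<\delta$ and let $\hat f\in\mathop{\rm argmin}_{g\in\Sigma}\mathcal{L}_\mu(g)$ be any minimizer. Then $\|f-\hat f\|_X\le C\,R(K_w)_X$.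
   Context: Convention: $\|g\|_Y:=\infty$ if $g\notin Y$. $\lambda_{\bf x}(g):=(g(x_1),\dots,g(x_m))$; on $\mathbb{R}^m$, $\|v\|:=\big[\frac1m\sum_{j=1}^m|v_j|^2\big]^{1/2}$. For $A,B\subset C(\Omega)$, $\operatorname{dist}(A,B)_{C(\Omega)}:=\sup_{a\in A}\inf_{b\in B}\|a-b\|_{C(\Omega)}$. $K_{w'}:=\{h\in K:\lambda_{\bf x}(h)=w'\}$, $K(w,\varepsilon):=\bigcup_{w'\in\mathbb{R}^m,\ \|w'-w\|\le\varepsilon}K_{w'}$. For $S\subset X$, $R(S)_X:=\inf\{r:\ S\subset B(z,r)_X\text{ for some }z\in X\}$ (Chebyshev radius in $X$). *)

theory Defs
  imports "HOL-Analysis.Analysis"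
begin

text \<open>Functions on \<Omega> are represented as total functions on the ambient Euclidean
space that vanish outside \<Omega> (extensional convention).\<close>

definition on_set :: "'a set \<Rightarrow> ('a \<Rightarrow> real) set" where
  "on_set \<Omega> = {g. \<forall>x. x \<notin> \<Omega> \<longrightarrow> g x = 0}"

definition Cspace :: "'a::topological_space set \<Rightarrow> ('a \<Rightarrow> real) set" where
  "Cspace \<Omega> = {g. continuous_on \<Omega> g \<and> g \<in> on_set \<Omega>}"

definition cnorm :: "'a set \<Rightarrow> ('a \<Rightarrow> real) \<Rightarrow> real" where
  "cnorm \<Omega> g = (SUP x\<in>\<Omega>. \<bar>g x\<bar>)"

definition normed_fspace :: "'a set \<Rightarrow> ('a \<Rightarrow> real) set \<Rightarrow> (('a \<Rightarrow> real) \<Rightarrow> real) \<Rightarrow> bool" where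
  "normed_fspace \<Omega> V N \<longleftrightarrow>
     V \<subseteq> on_set \<Omega> \<and> (\<lambda>x. 0) \<in> V \<and>
     (\<forall>g\<in>V. \<forall>h\<in>V. (\<lambda>x. g x + h x) \<in> V) \<and>
     (\<forall>c. \<forall>g\<in>V. (\<lambda>x. c * g x) \<in> V) \<and>
     (\<forall>g\<in>V. N g \<ge> 0 \<and> (N g = 0 \<longleftrightarrow> g = (\<lambda>x. 0))) \<and>
     (\<forall>c. \<forall>g\<in>V. N (\<lambda>x. c * g x) = \<bar>c\<bar> * N g) \<and>
     (\<forall>g\<in>V. \<forall>h\<in>V. N (\<lambda>x. g x + h x) \<le> N g + N h)"

definition banach_fspace :: "'a set \<Rightarrow> ('a \<Rightarrow> real) set \<Rightarrow> (('a \<Rightarrow> real) \<Rightarrow> real) \<Rightarrow> bool" where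
  "banach_fspace \<Omega> V N \<longleftrightarrow> normed_fspace \<Omega> V N \<and>
     (\<forall>s. (\<forall>n. s n \<in> V) \<and> (\<forall>e>0. \<exists>M. \<forall>m\<ge>M. \<forall>n\<ge>M. N (\<lambda>x. s m x - s n x) < e) \<longrightarrow>
          (\<exists>l\<in>V. (\<lambda>n. N (\<lambda>x. s n x - l x)) \<longlonglongrightarrow> 0))"

definition enorm :: "('a \<Rightarrow> real) set \<Rightarrow> (('a \<Rightarrow> real) \<Rightarrow> real) \<Rightarrow> ('a \<Rightarrow> real) \<Rightarrow> ereal" where
  "enorm V N g = (if g \<in> V then ereal (N g) else \<infinity>)"

definition compact_in_C :: "'a::topological_space set \<Rightarrow> ('a \<Rightarrow> real) set \<Rightarrow> bool" where
  "compact_in_C \<Omega> S \<longleftrightarrow> S \<subseteq> Cspace \<Omega> \<and>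
     (\<forall>s::nat\<Rightarrow>'a\<Rightarrow>real. (\<forall>n. s n \<in> S) \<longrightarrow>
        (\<exists>l\<in>S. \<exists>r::nat\<Rightarrow>nat. strict_mono r \<and> (\<lambda>n. cnorm \<Omega> (\<lambda>x. s (r n) x - l x)) \<longlonglongrightarrow> 0))"

text \<open>Sampling operator and normalized Euclidean norm on R^m (vectors as nat \<Rightarrow> real, indices < m).\<close>
definition lam :: "(nat \<Rightarrow> 'a) \<Rightarrow> ('a \<Rightarrow> real) \<Rightarrow> nat \<Rightarrow> real" where
  "lam xs g = (\<lambda>j. g (xs j))"

definition vnorm :: "nat \<Rightarrow> (nat \<Rightarrow> real) \<Rightarrow> real" where
  "vnorm m v = sqrt ((1 / real m) * (\<Sum>j<m. \<bar>v j\<bar>^2))"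

definition Kfib :: "('a \<Rightarrow> real) set \<Rightarrow> nat \<Rightarrow> (nat \<Rightarrow> 'a) \<Rightarrow> (nat \<Rightarrow> real) \<Rightarrow> ('a \<Rightarrow> real) set" where
  "Kfib K m xs w' = {h\<in>K. \<forall>j<m. lam xs h j = w' j}"

definition Kball :: "('a \<Rightarrow> real) set \<Rightarrow> nat \<Rightarrow> (nat \<Rightarrow> 'a) \<Rightarrow> (nat \<Rightarrow> real) \<Rightarrow> real \<Rightarrow> ('a \<Rightarrow> real) set" where
  "Kball K m xs w e = (\<Union>w'\<in>{w'. vnorm m (\<lambda>j. w' j - w j) \<le> e}. Kfib K m xs w')"

definition chebR :: "('a \<Rightarrow> real) set \<Rightarrow> (('a \<Rightarrow> real) \<Rightarrow> real) \<Rightarrow> ('a \<Rightarrow> real) set \<Rightarrow> ereal" where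
  "chebR X N S = (INF z\<in>X. SUP s\<in>S. enorm X N (\<lambda>x. s x - z x))"

text \<open>dist(A,B) in C(\<Omega>) (one-sided Hausdorff), with inf over empty set = \<infinity>.\<close>
definition distC :: "'a set \<Rightarrow> ('a \<Rightarrow> real) set \<Rightarrow> ('a \<Rightarrow> real) set \<Rightarrow> ereal" where
  "distC \<Omega> A B = (SUP a\<in>A. INF b\<in>B. ereal (cnorm \<Omega> (\<lambda>x. a x - b x)))"

definition Lmu :: "nat \<Rightarrow> (nat \<Rightarrow> 'a) \<Rightarrow> (nat \<Rightarrow> real) \<Rightarrow> ('a \<Rightarrow> real) set \<Rightarrow> (('a \<Rightarrow> real) \<Rightarrow> real)
    \<Rightarrow> real \<Rightarrow> ('a \<Rightarrow> real) \<Rightarrow> ereal" where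
  "Lmu m xs w Y NY \<mu> g = ereal (vnorm m (\<lambda>j. lam xs g j - w j)) + ereal \<mu> * enorm Y NY g"

end

theory Submission
  imports Defs
begin

text \<open>A function \<open>b\<close> of \<open>\<Sigma> \<inter> K\<close> with \<open>\<parallel>f - b\<parallel>\<^sub>C < \<delta>\<close> has \<open>\<L>\<^sub>\<mu>(b) \<le> \<delta> + \<mu> \<le> \<mu>(\<mu> + 1)\<close>,
  so the minimizer \<open>fhat\<close> fits the data up to \<open>\<mu>(\<mu> + 1)\<close> and has \<open>\<parallel>fhat\<parallel>\<^sub>Y \<le> 1 + \<mu>\<close>.
  Its radial retraction \<open>fr = fhat / max 1 \<parallel>fhat\<parallel>\<^sub>Y\<close> lies in \<open>K\<close> and is \<open>\<mu> C\<^sub>Y \<le> \<epsilon>\<close>-close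
  to \<open>fhat\<close> in \<open>C(\<Omega>)\<close>, so both \<open>f\<close> and \<open>fr\<close> lie in \<open>K(w, 2\<epsilon>)\<close>. Hence
  \<open>\<parallel>f - fhat\<parallel>\<^sub>X \<le> \<parallel>f - fr\<parallel>\<^sub>X + \<parallel>fr - fhat\<parallel>\<^sub>X \<le> 2 R(K(w, 2\<epsilon>))\<^sub>X + C\<^sub>X \<epsilon> \<le> C R(K\<^sub>w)\<^sub>X\<close>.
  Compactness of \<open>K\<close>, \<open>R(K\<^sub>w)\<^sub>X \<noteq> 0\<close> and \<open>C > 2\<close> only matter for the hypothesis on \<open>\<epsilon>\<close> to
  hold for small \<open>\<mu>\<close>.\<close>

lemma normed_fspace_add_closed:
  "normed_fspace \<Omega> V N \<Longrightarrow> g \<in> V \<Longrightarrow> h \<in> V \<Longrightarrow> (\<lambda>x. g x + h x) \<in> V"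
  unfolding normed_fspace_def by blast

lemma normed_fspace_scale_closed:
  "normed_fspace \<Omega> V N \<Longrightarrow> g \<in> V \<Longrightarrow> (\<lambda>x. c * g x) \<in> V"
  unfolding normed_fspace_def by blast

lemma normed_fspace_norm_nonneg: "normed_fspace \<Omega> V N \<Longrightarrow> g \<in> V \<Longrightarrow> N g \<ge> 0"
  unfolding normed_fspace_def by blast

lemma normed_fspace_norm_scale:
  "normed_fspace \<Omega> V N \<Longrightarrow> g \<in> V \<Longrightarrow> N (\<lambda>x. c * g x) = \<bar>c\<bar> * N g"
  unfolding normed_fspace_def by blast

lemma normed_fspace_norm_triangle:
  "normed_fspace \<Omega> V N \<Longrightarrow> g \<in> V \<Longrightarrow> h \<in> V \<Longrightarrow> N (\<lambda>x. g x + h x) \<le> N g + N h"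
  unfolding normed_fspace_def by blast

lemma normed_fspace_diff_closed:
  assumes "normed_fspace \<Omega> V N" "g \<in> V" "h \<in> V"
  shows "(\<lambda>x. g x - h x) \<in> V"
  using normed_fspace_add_closed[OF assms(1,2) normed_fspace_scale_closed[OF assms(1,3), of "-1"]]
  by simp

lemma normed_fspace_norm_commute:
  assumes "normed_fspace \<Omega> V N" "g \<in> V" "h \<in> V"
  shows "N (\<lambda>x. g x - h x) = N (\<lambda>x. h x - g x)"
  using normed_fspace_norm_scale[OF assms(1) normed_fspace_diff_closed[OF assms], of "-1"]
  by simp

lemma normed_fspace_norm_diff_triangle:
  assumes "normed_fspace \<Omega> V N" "a \<in> V" "b \<in> V" "c \<in> V"
  shows "N (\<lambda>x. a x - c x) \<le> N (\<lambda>x. a x - b x) + N (\<lambda>x. b x - c x)"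
  using normed_fspace_norm_triangle[OF assms(1)
      normed_fspace_diff_closed[OF assms(1,2,3)] normed_fspace_diff_closed[OF assms(1,3,4)]]
  by simp

lemma chebR_diameter:
  assumes V: "normed_fspace \<Omega> V N" and "a \<in> S" "b \<in> S" "a \<in> V" "b \<in> V"
  shows "ereal (N (\<lambda>x. a x - b x)) \<le> 2 * chebR V N S"
proof -
  have "ereal (N (\<lambda>x. a x - b x) / 2) \<le> (SUP s\<in>S. enorm V N (\<lambda>x. s x - z x))"
    if z: "z \<in> V" for z
  proof -
    have sup: "ereal (N (\<lambda>x. s x - z x)) \<le> (SUP s\<in>S. enorm V N (\<lambda>x. s x - z x))"
      if "s \<in> S" "s \<in> V" for s
      using SUP_upper[OF \<open>s \<in> S\<close>, of "\<lambda>s. enorm V N (\<lambda>x. s x - z x)"]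
        normed_fspace_diff_closed[OF V \<open>s \<in> V\<close> z]
      by (simp add: enorm_def)
    have "N (\<lambda>x. a x - b x) \<le> N (\<lambda>x. a x - z x) + N (\<lambda>x. b x - z x)"
      using normed_fspace_norm_diff_triangle[OF V \<open>a \<in> V\<close> z \<open>b \<in> V\<close>]
        normed_fspace_norm_commute[OF V z \<open>b \<in> V\<close>]
      by simp
    then consider "N (\<lambda>x. a x - b x) / 2 \<le> N (\<lambda>x. a x - z x)"
      | "N (\<lambda>x. a x - b x) / 2 \<le> N (\<lambda>x. b x - z x)"
      by linarith
    then show ?thesis
    proof cases
      case 1
      show ?thesis
        using order_trans[OF ereal_less_eq(3)[THEN iffD2, OF 1] sup[OF \<open>a \<in> S\<close> \<open>a \<in> V\<close>]] .
    next
      case 2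
      show ?thesis
        using order_trans[OF ereal_less_eq(3)[THEN iffD2, OF 2] sup[OF \<open>b \<in> S\<close> \<open>b \<in> V\<close>]] .
    qed
  qed
  then have "ereal (N (\<lambda>x. a x - b x) / 2) \<le> chebR V N S"
    unfolding chebR_def by (rule INF_greatest)
  from ereal_mult_left_mono[OF this, of 2] show ?thesis
    by simp
qed

lemma enorm_diff_le_chebR:
  assumes V: "normed_fspace \<Omega> V N" and "f \<in> S" "g \<in> S" "f \<in> V" "g \<in> V" "h \<in> V"
    and "N (\<lambda>x. h x - g x) \<le> r"
  shows "enorm V N (\<lambda>x. f x - h x) \<le> ereal r + 2 * chebR V N S"
proof -
  have "N (\<lambda>x. f x - h x) \<le> N (\<lambda>x. f x - g x) + r"
    using normed_fspace_norm_diff_triangle[OF V \<open>f \<in> V\<close> \<open>g \<in> V\<close> \<open>h \<in> V\<close>]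
      normed_fspace_norm_commute[OF V \<open>g \<in> V\<close> \<open>h \<in> V\<close>] assms(7)
    by linarith
  then have "enorm V N (\<lambda>x. f x - h x) \<le> ereal (N (\<lambda>x. f x - g x)) + ereal r"
    using normed_fspace_diff_closed[OF V \<open>f \<in> V\<close> \<open>h \<in> V\<close>] by (simp add: enorm_def)
  also have "\<dots> \<le> 2 * chebR V N S + ereal r"
    using chebR_diameter[OF assms(1-5)] by (rule add_right_mono)
  finally show ?thesis
    by (simp add: add.commute)
qed

lemma cnorm_upper:
  "compact \<Omega> \<Longrightarrow> continuous_on \<Omega> g \<Longrightarrow> x \<in> \<Omega> \<Longrightarrow> \<bar>g x\<bar> \<le> cnorm \<Omega> g"
  unfolding cnorm_def
  by (rule cSUP_upper)
    (auto intro!: bounded_imp_bdd_above compact_imp_bounded compact_continuous_image continuous_intros)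

lemma cnorm_least: "\<Omega> \<noteq> {} \<Longrightarrow> \<forall>x\<in>\<Omega>. \<bar>g x\<bar> \<le> c \<Longrightarrow> cnorm \<Omega> g \<le> c"
  unfolding cnorm_def by (simp add: cSUP_least)

lemma Cspace_diff: "g \<in> Cspace \<Omega> \<Longrightarrow> h \<in> Cspace \<Omega> \<Longrightarrow> (\<lambda>x. g x - h x) \<in> Cspace \<Omega>"
  by (auto simp: Cspace_def on_set_def intro: continuous_on_diff)

lemma indicator_in_Cspace: "indicator \<Omega> \<in> Cspace \<Omega>"
proof -
  have "continuous_on \<Omega> (indicator \<Omega> :: 'a \<Rightarrow> real)"
    by (rule continuous_on_cong[THEN iffD1, OF refl _ continuous_on_const[of \<Omega> 1]]) simp
  then show ?thesis
    by (simp add: Cspace_def on_set_def)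
qed

lemma embedding_constant_nonneg:
  assumes "normed_fspace \<Omega> X NX" "Cspace \<Omega> \<subseteq> X" "\<forall>g\<in>Cspace \<Omega>. NX g \<le> CX * cnorm \<Omega> g"
    and "compact \<Omega>" "\<Omega> \<noteq> {}"
  shows "CX \<ge> 0"
proof -
  have "0 \<le> NX (indicator \<Omega>)"
    using normed_fspace_norm_nonneg[OF assms(1)] assms(2) indicator_in_Cspace by blast
  also have "\<dots> \<le> CX * cnorm \<Omega> (indicator \<Omega>)"
    using assms(3) indicator_in_Cspace by blast
  finally have "0 \<le> CX * cnorm \<Omega> (indicator \<Omega>)" .
  moreover obtain x where "x \<in> \<Omega>"
    using \<open>\<Omega> \<noteq> {}\<close> by blast
  then have "1 \<le> cnorm \<Omega> (indicator \<Omega>)"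
    using cnorm_upper[OF \<open>compact \<Omega>\<close>] indicator_in_Cspace[of \<Omega>]
    unfolding Cspace_def by fastforce
  ultimately show ?thesis
    by (simp add: zero_le_mult_iff)
qed

lemma embedding_bound_pointwise:
  assumes "normed_fspace \<Omega> X NX" "Cspace \<Omega> \<subseteq> X" "\<forall>g\<in>Cspace \<Omega>. NX g \<le> CX * cnorm \<Omega> g"
    and "compact \<Omega>" "\<Omega> \<noteq> {}" "g \<in> Cspace \<Omega>" "\<forall>x\<in>\<Omega>. \<bar>g x\<bar> \<le> c"
  shows "NX g \<le> CX * c"
proof -
  have "CX \<ge> 0"
    by (rule embedding_constant_nonneg[OF assms(1-5)])
  then have "CX * cnorm \<Omega> g \<le> CX * c"
    using cnorm_least[OF \<open>\<Omega> \<noteq> {}\<close> assms(7)] by (simp add: mult_left_mono)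
  then show ?thesis
    using assms(3,6) by fastforce
qed

lemma vnorm_nonneg: "vnorm m v \<ge> 0"
  unfolding vnorm_def by (simp add: sum_nonneg)

lemma vnorm_le_uniform:
  assumes "c \<ge> 0" "\<And>j. j < m \<Longrightarrow> \<bar>v j\<bar> \<le> c"
  shows "vnorm m v \<le> c"
proof (cases "m = 0")
  case True
  then show ?thesis using assms by (simp add: vnorm_def)
next
  case False
  have "(\<Sum>j<m. \<bar>v j\<bar>^2) \<le> (\<Sum>j<m. c^2)"
    using assms by (intro sum_mono power_mono) auto
  then have "(1 / real m) * (\<Sum>j<m. \<bar>v j\<bar>^2) \<le> c^2"
    using False by (simp add: field_simps)
  then show ?thesis
    unfolding vnorm_def using assms(1) by (simp add: real_sqrt_le_iff real_le_lsqrt)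
qed

lemma vnorm_eq_L2_set: "vnorm m v = sqrt (1 / real m) * L2_set v {..<m}"
  unfolding vnorm_def L2_set_def by (simp add: real_sqrt_mult[symmetric] real_sqrt_divide)

lemma vnorm_triangle: "vnorm m (\<lambda>j. u j + v j) \<le> vnorm m u + vnorm m v"
  unfolding vnorm_eq_L2_set
  using mult_left_mono[OF L2_set_triangle_ineq[of u v "{..<m}"], of "sqrt (1 / real m)"]
  by (simp add: distrib_left)

lemma vnorm_lam_diff_le:
  assumes "\<forall>j<m. xs j \<in> \<Omega>" "c \<ge> 0" "\<forall>x\<in>\<Omega>. \<bar>g x - h x\<bar> \<le> c"
  shows "vnorm m (\<lambda>j. lam xs g j - lam xs h j) \<le> c"
  using assms by (intro vnorm_le_uniform) (auto simp: lam_def)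

lemma Kball_memberI_near:
  assumes "\<forall>j<m. xs j \<in> \<Omega>" "h \<in> K" "a \<ge> 0" "\<forall>x\<in>\<Omega>. \<bar>h x - g x\<bar> \<le> a"
    and "vnorm m (\<lambda>j. lam xs g j - w j) \<le> e" "a + e \<le> r"
  shows "h \<in> Kball K m xs w r"
proof -
  have "vnorm m (\<lambda>j. lam xs h j - w j)
      = vnorm m (\<lambda>j. (lam xs h j - lam xs g j) + (lam xs g j - w j))"
    by simp
  also have "\<dots> \<le> vnorm m (\<lambda>j. lam xs h j - lam xs g j) + vnorm m (\<lambda>j. lam xs g j - w j)"
    by (rule vnorm_triangle)
  also have "\<dots> \<le> r"
    using vnorm_lam_diff_le[OF assms(1,3,4)] assms(5,6) by linarith
  finally show ?thesis
    using \<open>h \<in> K\<close> unfolding Kball_def Kfib_def by (auto intro!: exI[of _ "lam xs h"])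
qed

lemma Kball_self: "h \<in> K \<Longrightarrow> 0 \<le> r \<Longrightarrow> h \<in> Kball K m xs (lam xs h) r"
  unfolding Kball_def Kfib_def by (auto simp: vnorm_def intro!: exI[of _ "lam xs h"])

lemma distC_lessE:
  assumes "a \<in> A" "distC \<Omega> A B < ereal d"
  obtains b where "b \<in> B" "cnorm \<Omega> (\<lambda>x. a x - b x) < d"
proof -
  have "(INF b\<in>B. ereal (cnorm \<Omega> (\<lambda>x. a x - b x))) < ereal d"
    using SUP_upper[OF \<open>a \<in> A\<close>] assms(2) unfolding distC_def by (rule le_less_trans)
  then show ?thesis
    using that by (auto simp: INF_less_iff)
qed

lemma Lmu_le_ereal_bounds:
  assumes Y: "normed_fspace \<Omega> Y NY" and "\<mu> > 0" and "Lmu m xs w Y NY \<mu> g \<le> ereal c"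
  shows "g \<in> Y" "vnorm m (\<lambda>j. lam xs g j - w j) \<le> c" "\<mu> * NY g \<le> c"
proof -
  show "g \<in> Y"
    using assms(2,3) by (auto simp: Lmu_def enorm_def split: if_splits)
  then have "vnorm m (\<lambda>j. lam xs g j - w j) + \<mu> * NY g \<le> c"
    using assms(3) by (simp add: Lmu_def enorm_def)
  moreover have "\<mu> * NY g \<ge> 0"
    using normed_fspace_norm_nonneg[OF Y \<open>g \<in> Y\<close>] \<open>\<mu> > 0\<close> by simp
  moreover have "vnorm m (\<lambda>j. lam xs g j - w j) \<ge> 0"
    by (rule vnorm_nonneg)
  ultimately show "vnorm m (\<lambda>j. lam xs g j - w j) \<le> c" "\<mu> * NY g \<le> c"
    by linarith+
qed

text \<open>The competitor is a function of \<open>\<Sigma> \<inter> K\<close> that is \<open>\<delta>\<close>-close to \<open>f\<close> in \<open>C(\<Omega>)\<close>.\<close>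

lemma Lmu_minimizer_le:
  assumes "compact \<Omega>" "\<forall>j<m. xs j \<in> \<Omega>" "Y \<subseteq> Cspace \<Omega>" "f \<in> {g\<in>Y. NY g \<le> 1}"
    and "distC \<Omega> {g\<in>Y. NY g \<le> 1} (\<Sigma> \<inter> {g\<in>Y. NY g \<le> 1}) < ereal \<delta>" "\<delta> \<ge> 0" "\<mu> \<ge> 0"
    and "\<forall>g\<in>\<Sigma>. Lmu m xs (lam xs f) Y NY \<mu> fhat \<le> Lmu m xs (lam xs f) Y NY \<mu> g"
  shows "Lmu m xs (lam xs f) Y NY \<mu> fhat \<le> ereal (\<delta> + \<mu>)"
proof -
  obtain b where b: "b \<in> \<Sigma>" "b \<in> Y" "NY b \<le> 1" and fb: "cnorm \<Omega> (\<lambda>x. f x - b x) < \<delta>"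
    using distC_lessE[OF assms(4,5)] by blast
  have "continuous_on \<Omega> (\<lambda>x. f x - b x)"
    using Cspace_diff[of f \<Omega> b] assms(3,4) b by (auto simp: Cspace_def)
  have "\<forall>x\<in>\<Omega>. \<bar>b x - f x\<bar> \<le> \<delta>"
  proof
    fix x assume "x \<in> \<Omega>"
    have "\<bar>f x - b x\<bar> \<le> cnorm \<Omega> (\<lambda>x. f x - b x)"
      using cnorm_upper[OF \<open>compact \<Omega>\<close> \<open>continuous_on \<Omega> (\<lambda>x. f x - b x)\<close> \<open>x \<in> \<Omega>\<close>] .
    then show "\<bar>b x - f x\<bar> \<le> \<delta>"
      using fb by (simp add: abs_minus_commute)
  qed
  then have "vnorm m (\<lambda>j. lam xs b j - lam xs f j) \<le> \<delta>"
    by (rule vnorm_lam_diff_le[OF assms(2,6)])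
  then have "Lmu m xs (lam xs f) Y NY \<mu> b \<le> ereal (\<delta> + \<mu>)"
    using b \<open>\<mu> \<ge> 0\<close> by (simp add: Lmu_def enorm_def add_mono mult_left_le)
  then show ?thesis
    using assms(8) b(1) by (meson order_trans)
qed

lemma Lmu_minimizer_fit:
  assumes Y: "normed_fspace \<Omega> Y NY" "Y \<subseteq> Cspace \<Omega>" and "compact \<Omega>" "\<forall>j<m. xs j \<in> \<Omega>"
    and "f \<in> {g\<in>Y. NY g \<le> 1}"
    and "distC \<Omega> {g\<in>Y. NY g \<le> 1} (\<Sigma> \<inter> {g\<in>Y. NY g \<le> 1}) < ereal \<delta>"
    and "\<mu> > 0" "\<delta> \<ge> 0" "\<delta> \<le> \<mu>^2"
    and "\<forall>g\<in>\<Sigma>. Lmu m xs (lam xs f) Y NY \<mu> fhat \<le> Lmu m xs (lam xs f) Y NY \<mu> g"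
  shows "fhat \<in> Y" "vnorm m (\<lambda>j. lam xs fhat j - lam xs f j) \<le> \<mu> * (\<mu> + 1)" "NY fhat \<le> 1 + \<mu>"
proof -
  have "Lmu m xs (lam xs f) Y NY \<mu> fhat \<le> ereal (\<delta> + \<mu>)"
    using Lmu_minimizer_le[OF assms(3,4) Y(2) assms(5,6,8)] assms(7,10) by simp
  also have "\<dots> \<le> ereal (\<mu> * (\<mu> + 1))"
    using \<open>\<delta> \<le> \<mu>^2\<close> by (simp add: power2_eq_square algebra_simps)
  finally have L: "Lmu m xs (lam xs f) Y NY \<mu> fhat \<le> ereal (\<mu> * (\<mu> + 1))" .
  show "fhat \<in> Y" "vnorm m (\<lambda>j. lam xs fhat j - lam xs f j) \<le> \<mu> * (\<mu> + 1)"
    by (rule Lmu_le_ereal_bounds[OF Y(1) \<open>\<mu> > 0\<close> L])+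
  have "\<mu> * NY fhat \<le> \<mu> * (\<mu> + 1)"
    by (rule Lmu_le_ereal_bounds(3)[OF Y(1) \<open>\<mu> > 0\<close> L])
  then show "NY fhat \<le> 1 + \<mu>"
    using \<open>\<mu> > 0\<close> by simp
qed

definition radial_retraction :: "(('a \<Rightarrow> real) \<Rightarrow> real) \<Rightarrow> ('a \<Rightarrow> real) \<Rightarrow> 'a \<Rightarrow> real" where
  "radial_retraction N g = (\<lambda>x. g x / max 1 (N g))"

lemma radial_retraction_in_unit_ball:
  assumes Y: "normed_fspace \<Omega> Y NY" and "g \<in> Y"
  shows "radial_retraction NY g \<in> {h\<in>Y. NY h \<le> 1}"
proof -
  have eq: "radial_retraction NY g = (\<lambda>x. (1 / max 1 (NY g)) * g x)"
    by (simp add: radial_retraction_def)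
  have "NY (radial_retraction NY g) = NY g / max 1 (NY g)"
    unfolding eq normed_fspace_norm_scale[OF Y \<open>g \<in> Y\<close>] by simp
  also have "\<dots> \<le> 1"
    by simp
  finally have "NY (radial_retraction NY g) \<le> 1" .
  moreover have "radial_retraction NY g \<in> Y"
    unfolding eq by (rule normed_fspace_scale_closed[OF Y \<open>g \<in> Y\<close>])
  ultimately show ?thesis
    by simp
qed

lemma radial_retraction_close:
  assumes Y: "normed_fspace \<Omega> Y NY" "Y \<subseteq> Cspace \<Omega>" and "compact \<Omega>"
    and CY: "\<forall>h\<in>{h\<in>Y. NY h \<le> 1}. cnorm \<Omega> h \<le> CY"
    and "g \<in> Y" "NY g \<le> 1 + t" "t \<ge> 0" "x \<in> \<Omega>"
  shows "\<bar>g x - radial_retraction NY g x\<bar> \<le> t * CY"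
proof -
  let ?r = "radial_retraction NY g"
  have rK: "?r \<in> {h\<in>Y. NY h \<le> 1}"
    by (rule radial_retraction_in_unit_ball[OF Y(1) \<open>g \<in> Y\<close>])
  then have "\<bar>?r x\<bar> \<le> CY"
    using cnorm_upper[OF \<open>compact \<Omega>\<close> _ \<open>x \<in> \<Omega>\<close>, of ?r] CY Y(2) by (force simp: Cspace_def)
  moreover have "g x - ?r x = (max 1 (NY g) - 1) * ?r x"
    by (simp add: radial_retraction_def field_simps)
  moreover have "0 \<le> max 1 (NY g) - 1" "max 1 (NY g) - 1 \<le> t"
    using assms(6,7) by auto
  ultimately show ?thesis
    by (simp add: abs_mult mult_mono)
qed

theorem theorem4p4:
  fixes \<Omega> :: "'a::euclidean_space set"
    and X Y \<Sigma> :: "('a \<Rightarrow> real) set"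
    and NX NY :: "('a \<Rightarrow> real) \<Rightarrow> real"
    and CX CY C \<mu> \<delta> :: real
    and m :: nat and xs :: "nat \<Rightarrow> 'a" and f fhat :: "'a \<Rightarrow> real"
  assumes dom: "\<exists>D. open D \<and> connected D \<and> bounded D \<and> D \<noteq> {} \<and> \<Omega> = closure D"
    and X: "banach_fspace \<Omega> X NX"
    and CX_sub: "Cspace \<Omega> \<subseteq> X"
    and CX_bd: "\<forall>g\<in>Cspace \<Omega>. NX g \<le> CX * cnorm \<Omega> g"
    and Y: "normed_fspace \<Omega> Y NY" and Y_sub: "Y \<subseteq> Cspace \<Omega>"
    and K_cpt: "compact_in_C \<Omega> {g\<in>Y. NY g \<le> 1}"
    and CY: "\<forall>g\<in>{g\<in>Y. NY g \<le> 1}. cnorm \<Omega> g \<le> CY"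
    and xs: "\<forall>j<m. xs j \<in> \<Omega>"
    and f: "f \<in> {g\<in>Y. NY g \<le> 1}"
    and R0: "chebR X NX (Kfib {g\<in>Y. NY g \<le> 1} m xs (lam xs f)) \<noteq> 0"
    and C: "C > 2" and mu: "\<mu> > 0" and delta: "\<delta> > 0" "\<delta> \<le> \<mu>^2"
    and eps: "ereal (CX * (\<mu> * max (\<mu> + 1) CY))
                + 2 * chebR X NX (Kball {g\<in>Y. NY g \<le> 1} m xs (lam xs f) (2 * (\<mu> * max (\<mu> + 1) CY)))
              \<le> ereal C * chebR X NX (Kfib {g\<in>Y. NY g \<le> 1} m xs (lam xs f))"
    and Sigma_sub: "\<Sigma> \<subseteq> Cspace \<Omega>"
    and Sigma_dist: "distC \<Omega> {g\<in>Y. NY g \<le> 1} (\<Sigma> \<inter> {g\<in>Y. NY g \<le> 1}) < ereal \<delta>"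
    and fhat: "fhat \<in> \<Sigma>"
    and fhat_min: "\<forall>g\<in>\<Sigma>. Lmu m xs (lam xs f) Y NY \<mu> fhat \<le> Lmu m xs (lam xs f) Y NY \<mu> g"
  shows "enorm X NX (\<lambda>x. f x - fhat x) \<le> ereal C * chebR X NX (Kfib {g\<in>Y. NY g \<le> 1} m xs (lam xs f))"
proof -
  define \<epsilon> where "\<epsilon> = \<mu> * max (\<mu> + 1) CY"
  define fr where "fr = radial_retraction NY fhat"
  have X': "normed_fspace \<Omega> X NX"
    using X by (simp add: banach_fspace_def)
  obtain D where "bounded D" "D \<noteq> {}" "\<Omega> = closure D"
    using dom by blast
  then have cpt: "compact \<Omega>" and ne: "\<Omega> \<noteq> {}"
    using closure_subset by (auto simp: compact_closure)
  note fit = Lmu_minimizer_fit[OF Y Y_sub cpt xs f Sigma_dist mu less_imp_le[OF delta(1)] delta(2) fhat_min]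
  have eps_ge: "\<mu> * CY \<le> \<epsilon>" "\<mu> * (\<mu> + 1) \<le> \<epsilon>"
    unfolding \<epsilon>_def using mu by (simp_all add: mult_left_mono)
  have eps_pos: "0 < \<epsilon>"
    unfolding \<epsilon>_def using mu by (simp add: less_max_iff_disj)
  have close: "\<forall>x\<in>\<Omega>. \<bar>fhat x - fr x\<bar> \<le> \<epsilon>"
  proof
    fix x assume "x \<in> \<Omega>"
    have "\<bar>fhat x - fr x\<bar> \<le> \<mu> * CY"
      unfolding fr_def using radial_retraction_close[OF Y Y_sub cpt CY fit(1,3) _ \<open>x \<in> \<Omega>\<close>] mu by simp
    then show "\<bar>fhat x - fr x\<bar> \<le> \<epsilon>"
      using eps_ge(1) by linarith
  qed
  have frK: "fr \<in> {g\<in>Y. NY g \<le> 1}"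
    unfolding fr_def by (rule radial_retraction_in_unit_ball[OF Y fit(1)])
  have fC: "f \<in> Cspace \<Omega>" and frC: "fr \<in> Cspace \<Omega>" and fhatC: "fhat \<in> Cspace \<Omega>"
    using f frK fhat Y_sub Sigma_sub by blast+
  have fK: "f \<in> Kball {g\<in>Y. NY g \<le> 1} m xs (lam xs f) (2 * \<epsilon>)"
    using Kball_self[OF f] eps_pos by simp
  have frK': "fr \<in> Kball {g\<in>Y. NY g \<le> 1} m xs (lam xs f) (2 * \<epsilon>)"
  proof (rule Kball_memberI_near[OF xs frK _ _ fit(2), where a = \<epsilon>])
    show "0 \<le> \<epsilon>" "\<epsilon> + \<mu> * (\<mu> + 1) \<le> 2 * \<epsilon>"
      using eps_pos eps_ge(2) by linarith+
    show "\<forall>x\<in>\<Omega>. \<bar>fr x - fhat x\<bar> \<le> \<epsilon>"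
      using close by (simp add: abs_minus_commute)
  qed
  have NX_close: "NX (\<lambda>x. fhat x - fr x) \<le> CX * \<epsilon>"
    by (rule embedding_bound_pointwise[OF X' CX_sub CX_bd cpt ne Cspace_diff[OF fhatC frC] close])
  have "f \<in> X" "fr \<in> X" "fhat \<in> X"
    using CX_sub fC frC fhatC by blast+
  then have "enorm X NX (\<lambda>x. f x - fhat x)
      \<le> ereal (CX * \<epsilon>) + 2 * chebR X NX (Kball {g\<in>Y. NY g \<le> 1} m xs (lam xs f) (2 * \<epsilon>))"
    by (rule enorm_diff_le_chebR[OF X' fK frK' _ _ _ NX_close])
  then show ?thesis
    using eps unfolding \<epsilon>_def by (rule order_trans)
qed

end
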